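(* Let $r>1$, let $x_0,y_0$ be positive integers and let $\{(X_t,Y_t)\}_{t\ge 0}$ be the CA competition process with fitness ratio $r$ started at $(x_0,y_0)$. Let $N=\sum_{t=0}^\infty \mathbf{1}\{X_t=Y_t\}$ be the total number of ties. Then for every positive integer $n$, \[ \mathbb{P}[N\ge n]\le C\left(\frac{2}{1+r}\right)^{n-1}, \] where $C=1$ if $x_0\le y_0$, and \[ C=\frac{(y_0)_{x_0-y_0}}{(rx_0+y_0)_{x_0-y_0}}\left(1+\frac1r\right)^{x_0-y_0}\quad\text{if } x_0>y_0. \]
   Context: The CA competition process with fitness ratio $r\ge 1$ started at $(x_0,y_0)$ is the discrete-time Markov chain $\{(X_t,Y_t)\}_{t\ge0}$ on $\{(x,y)\in\mathbb{Z}^2: x\ge1,y\ge1\}$ with $(X_0,Y_0)=(x_0,y_0)$ and transition probabilities: from $(x,y)$ it moves to $(x+1,y)$ with probability $\frac{rx}{rx+y}$ and to $(x,y+1)$ with probability $\frac{y}{rx+y}$. $(x)_k=\prod_{i=0}^{k-1}(x+i)$ denotes the Pochhammer symbol (with $(x)_0=1$). *)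

theory Defs
  imports "HOL-Probability.Probability"
begin

text \<open>Realisation of the CA competition process with fitness ratio r started at (x0,y0):
  it is driven by an i.i.d. sequence of Uniform(0,1) random variables U_0, U_1, ...;
  at step t the process moves from (x,y) to (x+1,y) if U_t < r x/(r x + y) and to
  (x,y+1) otherwise. This gives exactly the stated transition probabilities.\<close>

definition ca_step :: "real \<Rightarrow> nat \<times> nat \<Rightarrow> real \<Rightarrow> nat \<times> nat" where
  "ca_step r s u = (let x = fst s; y = snd s in
     if u < r * real x / (r * real x + real y) then (x + 1, y) else (x, y + 1))"

fun ca_state :: "real \<Rightarrow> nat \<Rightarrow> nat \<Rightarrow> real stream \<Rightarrow> nat \<Rightarrow> nat \<times> nat" where
  "ca_state r x0 y0 \<omega> 0 = (x0, y0)"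
| "ca_state r x0 y0 \<omega> (Suc t) = ca_step r (ca_state r x0 y0 \<omega> t) (\<omega> !! t)"

definition ca_space :: "real stream measure" where
  "ca_space = stream_space (uniform_measure lborel {0<..<1::real})"

definition ca_X :: "real \<Rightarrow> nat \<Rightarrow> nat \<Rightarrow> real stream \<Rightarrow> nat \<Rightarrow> nat" where
  "ca_X r x0 y0 \<omega> t = fst (ca_state r x0 y0 \<omega> t)"

definition ca_Y :: "real \<Rightarrow> nat \<Rightarrow> nat \<Rightarrow> real stream \<Rightarrow> nat \<Rightarrow> nat" where
  "ca_Y r x0 y0 \<omega> t = snd (ca_state r x0 y0 \<omega> t)"

definition num_ties :: "real \<Rightarrow> nat \<Rightarrow> nat \<Rightarrow> real stream \<Rightarrow> enat" where
  "num_ties r x0 y0 \<omega> =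
     (let S = {t. ca_X r x0 y0 \<omega> t = ca_Y r x0 y0 \<omega> t} in
      if finite S then enat (card S) else \<infinity>)"

end

theory Submission
  imports Defs
begin

text \<open>Write \<open>q = 2 / (1 + r)\<close>, \<open>p = r x / (r x + y)\<close> and \<open>H(x, y)\<close> for the constant of the theorem
  at the starting point \<open>(x, y)\<close>, so \<open>H = 1\<close> when \<open>x \<le> y\<close>. For \<open>k \<ge> 1\<close> the function
  \<open>B(k, x, y) = H(x, y) q ^ (k - 1)\<close> satisfies
  \<open>p B(k - [x = y], x + 1, y) + (1 - p) B(k - [x = y], x, y + 1) \<le> B(k, x, y)\<close>:
  below the diagonal \<open>H\<close> is constant, above it \<open>H\<close> is superharmonic for the chain (a Pochhammer
  computation), and on the diagonal one tie is spent at the price of the factor \<open>q\<close>. By induction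
  on the horizon, \<open>B(k, x\<^sub>0, y\<^sub>0)\<close> bounds the probability of \<open>k\<close> ties before any finite time, and
  continuity from below passes to the total number of ties.\<close>

abbreviation unit_uniform :: "real measure" where
  "unit_uniform \<equiv> uniform_measure lborel {0<..<1}"

lemma prob_space_unit_uniform: "prob_space unit_uniform"
  by (rule prob_space_uniform_measure) auto

lemma prob_space_ca_space: "prob_space ca_space"
  unfolding ca_space_def by (rule prob_space.prob_space_stream_space[OF prob_space_unit_uniform])

lemma nn_integral_unit_uniform_threshold:
  assumes "0 < p" "p < 1" "0 \<le> a" "0 \<le> b"
  shows "(\<integral>\<^sup>+u. ennreal (if u < p then a else b) \<partial>unit_uniform) = ennreal (p * a + (1 - p) * b)"
proof -
  have split: "(\<lambda>u. ennreal (if u < p then a else b))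
      = (\<lambda>u. ennreal a * indicator {..<p} u + ennreal b * indicator {p..} u)"
    by (auto simp: indicator_def fun_eq_iff)
  have "{0<..<1::real} \<inter> {..<p} = {0<..<p}" "{0<..<1::real} \<inter> {p..} = {p..<1}"
    using assms by auto
  then have "emeasure unit_uniform {..<p} = ennreal p" "emeasure unit_uniform {p..} = ennreal (1 - p)"
    using assms by (simp_all add: divide_ennreal_def)
  then show ?thesis
    unfolding split using assms
    by (simp add: nn_integral_add nn_integral_cmult_indicator ennreal_mult'[symmetric]
        ennreal_plus[symmetric] mult.commute del: ennreal_plus)
qed

definition ca_x_prob :: "real \<Rightarrow> nat \<Rightarrow> nat \<Rightarrow> real" where
  "ca_x_prob r x y = r * real x / (r * real x + real y)"

lemma ca_x_prob_bounds:
  assumes "0 < r" "0 < x" "0 < y"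
  shows "0 < ca_x_prob r x y" "ca_x_prob r x y < 1"
proof -
  have "0 < r * real x" "0 < real y" using assms by auto
  then show "0 < ca_x_prob r x y" "ca_x_prob r x y < 1"
    unfolding ca_x_prob_def by (simp_all add: divide_less_eq)
qed

lemma ca_step_eq: "ca_step r (x, y) u = (if u < ca_x_prob r x y then (x + 1, y) else (x, y + 1))"
  unfolding ca_step_def ca_x_prob_def by simp

lemma ca_state_Cons:
  "ca_state r x y (u ## \<omega>) (Suc t) = ca_state r (fst (ca_step r (x, y) u)) (snd (ca_step r (x, y) u)) \<omega> t"
  by (induction t) auto

lemma measurable_ca_state: "(\<lambda>\<omega>. ca_state r x y \<omega> t) \<in> ca_space \<rightarrow>\<^sub>M count_space UNIV"
proof (induction t)
  case (Suc t)
  have "(\<lambda>\<omega>. ca_step r s (\<omega> !! t)) \<in> ca_space \<rightarrow>\<^sub>M count_space UNIV" for s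
    unfolding ca_step_def Let_def ca_space_def by measurable
  then show ?case
    using Suc by (simp add: measurable_compose_countable[where f="\<lambda>s \<omega>. ca_step r s (\<omega> !! t)"])
qed simp

definition ties_before :: "real \<Rightarrow> nat \<Rightarrow> nat \<Rightarrow> nat \<Rightarrow> real stream \<Rightarrow> nat" where
  "ties_before r x y T \<omega> = (\<Sum>t<T. of_bool (ca_X r x y \<omega> t = ca_Y r x y \<omega> t))"

lemma measurable_ties_before: "ties_before r x y T \<in> ca_space \<rightarrow>\<^sub>M count_space UNIV"
proof (induction T)
  case 0
  then show ?case by (simp add: ties_before_def)
next
  case (Suc T)
  define tie :: "nat \<times> nat \<Rightarrow> nat" where "tie s = of_bool (fst s = snd s)" for s
  have eq: "ties_before r x y (Suc T) \<omega> = ties_before r x y T \<omega> + tie (ca_state r x y \<omega> T)" for \<omega>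
    by (simp add: ties_before_def ca_X_def ca_Y_def tie_def)
  have "(\<lambda>\<omega>. n + tie (ca_state r x y \<omega> T)) \<in> ca_space \<rightarrow>\<^sub>M count_space UNIV" for n
    by (rule measurable_compose[OF measurable_ca_state, where g="\<lambda>s. n + tie s"]) simp
  then show ?case
    unfolding eq[abs_def] using Suc
    by (simp add: measurable_compose_countable[where f="\<lambda>n \<omega>. n + tie (ca_state r x y \<omega> T)"])
qed

lemma ties_before_Suc_Cons:
  "ties_before r x y (Suc T) (u ## \<omega>)
     = of_bool (x = y) + ties_before r (fst (ca_step r (x, y) u)) (snd (ca_step r (x, y) u)) T \<omega>"
  unfolding ties_before_def ca_X_def ca_Y_def
  by (simp only: sum.lessThan_Suc_shift ca_state_Cons) simp

lemma emeasure_ties_before_Suc: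
  "emeasure ca_space {\<omega> \<in> space ca_space. k \<le> ties_before r x y (Suc T) \<omega>}
   = (\<integral>\<^sup>+u. emeasure ca_space {\<omega> \<in> space ca_space.
        k - of_bool (x = y) \<le> ties_before r (fst (ca_step r (x, y) u)) (snd (ca_step r (x, y) u)) T \<omega>}
      \<partial>unit_uniform)"
proof -
  have "{\<omega> \<in> space ca_space. k \<le> ties_before r x y (Suc T) \<omega>} \<in> sets ca_space"
    using measurable_ties_before[of r x y "Suc T"] by measurable
  then show ?thesis
    unfolding ca_space_def
    by (subst prob_space.emeasure_stream_space[OF prob_space_unit_uniform])
      (auto intro!: nn_integral_cong arg_cong[where f="emeasure _"]
        simp: space_stream_space ties_before_Suc_Cons)
qed

lemma emeasure_ties_before_le:
  fixes B :: "nat \<Rightarrow> nat \<Rightarrow> nat \<Rightarrow> real"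
  assumes r: "0 < r"
    and B_nonneg: "\<And>k x y. 1 \<le> x \<Longrightarrow> 1 \<le> y \<Longrightarrow> 0 \<le> B k x y"
    and B_0: "\<And>x y. 1 \<le> x \<Longrightarrow> 1 \<le> y \<Longrightarrow> 1 \<le> B 0 x y"
    and B_step: "\<And>k x y. 1 \<le> x \<Longrightarrow> 1 \<le> y \<Longrightarrow> 1 \<le> k \<Longrightarrow>
      ca_x_prob r x y * B (k - of_bool (x = y)) (x + 1) y
      + (1 - ca_x_prob r x y) * B (k - of_bool (x = y)) x (y + 1) \<le> B k x y"
    and "1 \<le> x" "1 \<le> y"
  shows "emeasure ca_space {\<omega> \<in> space ca_space. k \<le> ties_before r x y T \<omega>} \<le> B k x y"
proof -
  have le_B_0: "emeasure ca_space A \<le> B 0 x y" if "1 \<le> x" "1 \<le> y" for A x y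
  proof -
    have "emeasure ca_space A \<le> 1"
      by (rule prob_space.emeasure_le_1[OF prob_space_ca_space])
    also have "1 \<le> ennreal (B 0 x y)"
      using ennreal_leI[OF B_0[OF that]] by simp
    finally show ?thesis .
  qed
  show ?thesis
    using \<open>1 \<le> x\<close> \<open>1 \<le> y\<close>
  proof (induction T arbitrary: k x y)
    case 0
    then show ?case
      using le_B_0 by (cases "k = 0") (auto simp: ties_before_def)
  next
    case (Suc T)
    show ?case
    proof (cases "k = 0")
      case True
      then show ?thesis using le_B_0 Suc.prems by simp
    next
      case False
      define p where "p = ca_x_prob r x y"
      define k' where "k' = k - of_bool (x = y)"
      have p: "0 < p" "p < 1"
        unfolding p_def using ca_x_prob_bounds r Suc.prems by auto
      have "emeasure ca_space {\<omega> \<in> space ca_space. k \<le> ties_before r x y (Suc T) \<omega>}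
         = (\<integral>\<^sup>+u. emeasure ca_space {\<omega> \<in> space ca_space.
              k' \<le> ties_before r (fst (ca_step r (x, y) u)) (snd (ca_step r (x, y) u)) T \<omega>} \<partial>unit_uniform)"
        unfolding k'_def by (rule emeasure_ties_before_Suc)
      also have "\<dots> \<le> (\<integral>\<^sup>+u. ennreal (if u < p then B k' (x + 1) y else B k' x (y + 1)) \<partial>unit_uniform)"
        using Suc.IH Suc.prems by (intro nn_integral_mono) (auto simp: ca_step_eq p_def)
      also have "\<dots> = ennreal (p * B k' (x + 1) y + (1 - p) * B k' x (y + 1))"
        using p B_nonneg Suc.prems by (intro nn_integral_unit_uniform_threshold) auto
      also have "\<dots> \<le> ennreal (B k x y)"
        using B_step[of x y k] Suc.prems False unfolding p_def k'_def by (auto intro: ennreal_leI)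
      finally show ?thesis .
    qed
  qed
qed

lemma pochhammer_mono:
  fixes u v :: real
  assumes "0 < u" "u \<le> v"
  shows "pochhammer u m \<le> pochhammer v m"
proof (induction m)
  case (Suc m)
  have "pochhammer u m * (u + m) \<le> pochhammer v m * (v + m)"
    using Suc assms by (intro mult_mono) (auto intro: pochhammer_nonneg)
  then show ?case by (simp add: pochhammer_Suc)
qed simp

lemma square_mult_pochhammer_le_pochhammer:
  fixes b r z :: real
  assumes "0 < b" "1 \<le> r" "0 \<le> z" "z \<le> b + r + m"
  shows "z\<^sup>2 * pochhammer (b + 1) m \<le> pochhammer (b + r) (m + 2)"
proof -
  have "z\<^sup>2 \<le> (b + r + m) * (b + r + m + 1)"
    using assms unfolding power2_eq_square by (intro mult_mono) auto
  moreover have "pochhammer (b + 1) m \<le> pochhammer (b + r) m"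
    using assms by (intro pochhammer_mono) auto
  ultimately have "z\<^sup>2 * pochhammer (b + 1) m \<le> (b + r + m) * (b + r + m + 1) * pochhammer (b + r) m"
    using assms by (intro mult_mono) (auto intro: pochhammer_nonneg)
  also have "\<dots> = pochhammer (b + r) (m + 2)"
    by (simp add: pochhammer_Suc numeral_2_eq_2 algebra_simps)
  finally show ?thesis .
qed

definition ca_tie_const :: "real \<Rightarrow> nat \<Rightarrow> nat \<Rightarrow> real" where
  "ca_tie_const r x y = (if x \<le> y then 1
     else pochhammer (real y) (x - y) / pochhammer (r * real x + real y) (x - y) * (1 + 1 / r) ^ (x - y))"

lemma ca_tie_const_nonneg: "0 < r \<Longrightarrow> 0 < y \<Longrightarrow> 0 \<le> ca_tie_const r x y"
  unfolding ca_tie_const_def by (auto intro!: divide_nonneg_nonneg mult_nonneg_nonneg pochhammer_nonneg add_nonneg_pos)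

lemma ca_tie_const_y_step:
  assumes r: "0 < r" and y: "1 \<le> y" and "y < x"
  shows "(1 - ca_x_prob r x y) * ca_tie_const r x (y + 1) = ca_tie_const r x y / (1 + 1 / r)"
proof -
  obtain m where x: "x = y + Suc m" using \<open>y < x\<close> by (metis add_Suc_right less_imp_Suc_add)
  define a where "a = real y"
  define b where "b = r * real x + a"
  define c where "c = 1 + 1 / r"
  have b: "0 < b" unfolding b_def a_def using r y \<open>y < x\<close> by (intro add_pos_pos mult_pos_pos) auto
  have c: "0 < c" unfolding c_def using r by (auto intro!: add_pos_pos)
  have "1 - ca_x_prob r x y = a / b"
    using b unfolding ca_x_prob_def b_def a_def by (simp add: field_simps)
  moreover have "ca_tie_const r x (y + 1) = pochhammer (a + 1) m / pochhammer (b + 1) m * c ^ m"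
    unfolding ca_tie_const_def a_def b_def c_def x by (simp add: ac_simps)
  moreover have "ca_tie_const r x y = a * pochhammer (a + 1) m / (b * pochhammer (b + 1) m) * c ^ m * c"
    unfolding ca_tie_const_def a_def b_def c_def x by (simp add: pochhammer_rec)
  ultimately show ?thesis
    using b c unfolding c_def by simp
qed

lemma ca_tie_const_x_step:
  assumes r: "1 < r" and y: "1 \<le> y" and "y < x"
  shows "ca_x_prob r x y * ca_tie_const r (x + 1) y \<le> ca_tie_const r x y / (r + 1)"
proof -
  obtain m where x: "x = y + Suc m" using \<open>y < x\<close> by (metis add_Suc_right less_imp_Suc_add)
  define a where "a = real y"
  define X where "X = real x"
  define b where "b = r * X + a"
  define c where "c = 1 + 1 / r"
  define P where "P = pochhammer a (m + 1) * c ^ m / b"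
  have X: "X = a + 1 + m" unfolding X_def a_def x by simp
  have b: "0 < b" unfolding b_def X_def a_def using r \<open>y < x\<close> by (intro add_pos_nonneg mult_pos_pos) auto
  have rc: "r * c = r + 1" unfolding c_def using r by (simp add: field_simps)
  have c: "0 < c" unfolding c_def using r by (auto intro!: add_pos_pos)
  have P: "0 \<le> P" unfolding P_def c_def a_def using r y b by (simp add: pochhammer_nonneg)
  have Pb: "0 < pochhammer (b + 1) m" "0 < pochhammer (b + r) (m + 2)"
    using b r by (auto intro!: pochhammer_pos)
  have "pochhammer a (m + 2) = pochhammer a (m + 1) * X"
    using X by (simp add: numeral_2_eq_2 pochhammer_Suc algebra_simps)
  moreover have "r * real (x + 1) + real y = b + r" "x + 1 - y = m + 2"
    unfolding b_def X_def a_def x by (simp_all add: algebra_simps)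
  ultimately have "ca_tie_const r (x + 1) y = pochhammer a (m + 1) * X / pochhammer (b + r) (m + 2) * c ^ (m + 2)"
    unfolding ca_tie_const_def a_def[symmetric] c_def[symmetric] using x by simp
  moreover have "ca_x_prob r x y = r * X / b"
    unfolding ca_x_prob_def b_def X_def a_def ..
  ultimately have lhs: "ca_x_prob r x y * ca_tie_const r (x + 1) y
      = P * (r * X\<^sup>2 * c\<^sup>2 / pochhammer (b + r) (m + 2))"
    unfolding P_def by (simp add: power_add power2_eq_square)
  have "ca_tie_const r x y = pochhammer a (m + 1) / pochhammer b (m + 1) * c ^ (m + 1)"
    unfolding ca_tie_const_def a_def b_def X_def c_def x by simp
  then have rhs: "ca_tie_const r x y / (r + 1) = P * (1 / (r * pochhammer (b + 1) m))"
    unfolding P_def rc[symmetric] using r b c by (simp add: pochhammer_rec[of b] field_simps)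
  have "((r * c) * X)\<^sup>2 * pochhammer (b + 1) m \<le> pochhammer (b + r) (m + 2)"
    using y b r X b_def unfolding rc a_def
    by (intro square_mult_pochhammer_le_pochhammer) (auto simp: algebra_simps)
  then have "r * X\<^sup>2 * c\<^sup>2 / pochhammer (b + r) (m + 2) \<le> 1 / (r * pochhammer (b + 1) m)"
    using r Pb by (simp add: divide_simps power2_eq_square mult_ac)
  then show ?thesis
    unfolding lhs rhs using P by (intro mult_left_mono) auto
qed

lemma ca_tie_const_superharmonic:
  assumes r: "1 < r" and y: "1 \<le> y" and "y < x"
  shows "ca_x_prob r x y * ca_tie_const r (x + 1) y + (1 - ca_x_prob r x y) * ca_tie_const r x (y + 1)
    \<le> ca_tie_const r x y"
proof -
  have c: "1 + 1 / r = (r + 1) / r" and "r + 1 \<noteq> 0"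
    using r by (simp_all add: field_simps)
  have "ca_tie_const r x y / (r + 1) + ca_tie_const r x y / (1 + 1 / r)
      = ca_tie_const r x y / (r + 1) + ca_tie_const r x y * r / (r + 1)"
    unfolding c by simp
  also have "\<dots> = (ca_tie_const r x y + ca_tie_const r x y * r) / (r + 1)"
    by (simp add: add_divide_distrib)
  also have "\<dots> = ca_tie_const r x y"
    using \<open>r + 1 \<noteq> 0\<close> by (simp add: field_simps)
  finally have "ca_tie_const r x y / (r + 1) + ca_tie_const r x y / (1 + 1 / r) = ca_tie_const r x y" .
  then show ?thesis
    using ca_tie_const_x_step[OF assms] ca_tie_const_y_step[of r y x] assms by simp
qed

lemma ca_tie_const_diagonal:
  assumes r: "1 < r" and x: "1 \<le> x"
  shows "ca_x_prob r x x * ca_tie_const r (x + 1) x + (1 - ca_x_prob r x x) \<le> 2 / (1 + r)"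
proof -
  have d: "0 < r * real (x + 1) + real x" using r x by (simp add: add_pos_pos)
  have "r * real x + real x = (1 + r) * real x"
    by (simp add: algebra_simps)
  then have p: "ca_x_prob r x x = r / (1 + r)"
    using x unfolding ca_x_prob_def by simp
  have "1 + 1 / r = (1 + r) / r"
    using r by (simp add: field_simps)
  then have one: "r / (1 + r) * (1 + 1 / r) = 1"
    using r by simp
  have "ca_tie_const r (x + 1) x = real x / (r * real (x + 1) + real x) * (1 + 1 / r)"
    unfolding ca_tie_const_def by simp
  then have "ca_x_prob r x x * ca_tie_const r (x + 1) x
      = real x / (r * real (x + 1) + real x) * (r / (1 + r) * (1 + 1 / r))"
    unfolding p by (simp only: ac_simps)
  also have "\<dots> = real x / (r * real (x + 1) + real x)"
    unfolding one by simp
  also have "\<dots> \<le> 1 / (1 + r)"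
    using d r by (simp add: divide_simps algebra_simps)
  finally show ?thesis
    unfolding p using r by (simp add: field_simps)
qed

definition ca_tie_bound :: "real \<Rightarrow> nat \<Rightarrow> nat \<Rightarrow> nat \<Rightarrow> real" where
  "ca_tie_bound r k x y = (if k = 0 then 1 else ca_tie_const r x y * (2 / (1 + r)) ^ (k - 1))"

lemma ca_tie_bound_nonneg: "0 < r \<Longrightarrow> 0 < y \<Longrightarrow> 0 \<le> ca_tie_bound r k x y"
  unfolding ca_tie_bound_def using ca_tie_const_nonneg by auto

lemma ca_tie_bound_step:
  assumes r: "1 < r" and x: "1 \<le> x" and y: "1 \<le> y" and k: "1 \<le> k"
  shows "ca_x_prob r x y * ca_tie_bound r (k - of_bool (x = y)) (x + 1) y
       + (1 - ca_x_prob r x y) * ca_tie_bound r (k - of_bool (x = y)) x (y + 1)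
       \<le> ca_tie_bound r k x y"
proof -
  define p where "p = ca_x_prob r x y"
  define q where "q = 2 / (1 + r)"
  have q: "0 \<le> q" unfolding q_def using r by simp
  have mix: "p * (A * Z) + (1 - p) * (B * Z) = (p * A + (1 - p) * B) * Z" for A B Z :: real
    by (simp add: algebra_simps)
  consider "x < y" | "x = y" | "y < x" by linarith
  then show ?thesis
  proof cases
    case 1
    then show ?thesis
      using k unfolding p_def[symmetric] q_def[symmetric] by (simp add: ca_tie_bound_def ca_tie_const_def algebra_simps)
  next
    case 2
    show ?thesis
    proof (cases "k = 1")
      case True
      then show ?thesis
        using 2 unfolding p_def[symmetric] by (simp add: ca_tie_bound_def ca_tie_const_def)
    next
      case False
      define j where "j = k - 2"
      have j: "k = Suc (Suc j)" using k False unfolding j_def by simp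
      have "ca_tie_bound r (k - 1) (x + 1) y = ca_tie_const r (x + 1) y * q ^ j"
        "ca_tie_bound r (k - 1) x (y + 1) = q ^ j" "ca_tie_bound r k x y = q * q ^ j"
        using 2 j k unfolding ca_tie_bound_def q_def by (simp_all add: ca_tie_const_def)
      moreover have "(p * ca_tie_const r (x + 1) y + (1 - p)) * q ^ j \<le> q * q ^ j"
        using ca_tie_const_diagonal[OF r x] 2 q unfolding p_def q_def by (intro mult_right_mono) auto
      ultimately show ?thesis
        using 2 unfolding p_def[symmetric] by (simp add: algebra_simps)
    qed
  next
    case 3
    have "ca_tie_bound r k x' y' = ca_tie_const r x' y' * q ^ (k - 1)" for x' y'
      using k unfolding ca_tie_bound_def q_def by simp
    moreover have "(p * ca_tie_const r (x + 1) y + (1 - p) * ca_tie_const r x (y + 1)) * q ^ (k - 1)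
        \<le> ca_tie_const r x y * q ^ (k - 1)"
      using ca_tie_const_superharmonic[OF r y 3] q unfolding p_def by (intro mult_right_mono) auto
    ultimately show ?thesis
      using 3 unfolding p_def[symmetric] by (simp add: mix)
  qed
qed

lemma ties_before_eq_card:
  "ties_before r x y T \<omega> = card ({t. ca_X r x y \<omega> t = ca_Y r x y \<omega> t} \<inter> {..<T})"
  unfolding ties_before_def by (simp add: Int_def conj_commute)

lemma enat_le_num_ties_iff: "enat n \<le> num_ties r x y \<omega> \<longleftrightarrow> (\<exists>T. n \<le> ties_before r x y T \<omega>)"
proof -
  define S where "S = {t. ca_X r x y \<omega> t = ca_Y r x y \<omega> t}"
  have ties: "ties_before r x y T \<omega> = card (S \<inter> {..<T})" for T
    unfolding S_def by (rule ties_before_eq_card)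
  show ?thesis
  proof (cases "finite S")
    case True
    then obtain T0 where "S \<subseteq> {..<T0}" using finite_nat_bounded by blast
    then have "S \<inter> {..<T0} = S" by auto
    moreover have "card (S \<inter> {..<T}) \<le> card S" for T
      using True by (simp add: card_mono)
    moreover have "num_ties r x y \<omega> = enat (card S)"
      unfolding num_ties_def S_def[symmetric] using True by simp
    ultimately show ?thesis
      unfolding ties by (metis enat_ord_simps(1) order_trans)
  next
    case False
    obtain F where F: "F \<subseteq> S" "finite F" "card F = n"
      using infinite_arbitrarily_large[OF False] by blast
    then obtain T where "F \<subseteq> {..<T}" using finite_nat_bounded by blast
    with F have "n \<le> card (S \<inter> {..<T})"
      by (metis Int_greatest card_mono finite_Int finite_lessThan)
    moreover have "num_ties r x y \<omega> = \<infinity>"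
      unfolding num_ties_def S_def[symmetric] using False by simp
    ultimately show ?thesis
      unfolding ties by auto
  qed
qed

lemma measure_num_ties_ge_le:
  assumes "\<And>T. emeasure ca_space {\<omega> \<in> space ca_space. n \<le> ties_before r x y T \<omega>} \<le> ennreal b"
    and "0 \<le> b"
  shows "measure ca_space {\<omega> \<in> space ca_space. enat n \<le> num_ties r x y \<omega>} \<le> b"
proof -
  interpret prob_space ca_space by (rule prob_space_ca_space)
  define A where "A T = {\<omega> \<in> space ca_space. n \<le> ties_before r x y T \<omega>}" for T
  have "A T \<in> sets ca_space" for T
    unfolding A_def using measurable_ties_before[of r x y T] by measurable
  moreover have "incseq A"
    by (rule incseq_SucI) (auto simp: A_def ties_before_def)
  ultimately have "emeasure ca_space (\<Union>T. A T) = (SUP T. emeasure ca_space (A T))"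
    by (intro SUP_emeasure_incseq[symmetric]) auto
  also have "\<dots> \<le> ennreal b"
    unfolding A_def using assms(1) by (intro SUP_least)
  finally have "measure ca_space (\<Union>T. A T) \<le> b"
    using \<open>0 \<le> b\<close> by (simp add: emeasure_eq_measure)
  moreover have "{\<omega> \<in> space ca_space. enat n \<le> num_ties r x y \<omega>} = (\<Union>T. A T)"
    unfolding A_def using enat_le_num_ties_iff by auto
  ultimately show ?thesis by simp
qed

theorem theorem4:
  fixes r :: real and x0 y0 n :: nat
  assumes "r > 1" and "x0 \<ge> 1" and "y0 \<ge> 1" and "n \<ge> 1"
  shows "measure ca_space {\<omega> \<in> space ca_space. enat n \<le> num_ties r x0 y0 \<omega>}
    \<le> (if x0 \<le> y0 then 1
        else pochhammer (real y0) (x0 - y0) / pochhammer (r * real x0 + real y0) (x0 - y0)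
             * (1 + 1 / r) ^ (x0 - y0))
      * (2 / (1 + r)) ^ (n - 1)"
proof -
  have "emeasure ca_space {\<omega> \<in> space ca_space. n \<le> ties_before r x0 y0 T \<omega>}
      \<le> ca_tie_bound r n x0 y0" for T
    using assms ca_tie_bound_step
    by (intro emeasure_ties_before_le[where B="ca_tie_bound r"])
      (auto intro: ca_tie_bound_nonneg simp: ca_tie_bound_def[of r 0])
  moreover have "0 \<le> ca_tie_bound r n x0 y0"
    using assms by (intro ca_tie_bound_nonneg) auto
  ultimately have "measure ca_space {\<omega> \<in> space ca_space. enat n \<le> num_ties r x0 y0 \<omega>}
      \<le> ca_tie_bound r n x0 y0"
    by (rule measure_num_ties_ge_le)
  then show ?thesis
    using assms by (simp add: ca_tie_bound_def ca_tie_const_def)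
qed

end
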